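(* Let $S=(v_1,\ldots,v_n)$ be an $(n,k)$-uframe, fix an index $i\in[n]$ with $|v_i|<1$, let $v\in\mathbb{R}^k$, and let $S'$ be obtained from $S$ by replacing $v_i$ with $v$. Then $S'$ is an $(n,k)$-frame and $$\det B_{S'}=\sqrt{\frac{1+|B_{S\setminus i}v_i|^2}{1+|B_{S\setminus i}v|^2}}.$$
   Context: An $(n,k)$-frame is an ordered $n$-tuple of vectors in $\mathbb{R}^k$ spanning $\mathbb{R}^k$. For a tuple $T=(w_j)$ of vectors in $\mathbb{R}^k$, $A_T=\sum_j w_j\otimes w_j=\sum_j w_jw_j^T$; if $A_T$ is positive definite, $B_T=A_T^{-1/2}$. An $(n,k)$-uframe is a frame $S$ with $A_S=I_k$. $S\setminus i$ denotes the tuple $(v_j)_{j\in[n],\,j\neq i}$. $|\cdot|$ is the Euclidean norm. *)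

theory Defs
  imports "HOL-Analysis.Analysis"
begin

text \<open>Tuples of vectors are functions from indices to vectors in real^'k; the
  tuple is indexed by a finite index set I (for an (n,k)-tuple, I = {..<n}).\<close>

definition outer :: "real^'k \<Rightarrow> real^'k^'k" where
  "outer w = (\<chi> a b. w $ a * w $ b)"

definition frameA :: "nat set \<Rightarrow> (nat \<Rightarrow> real^'k) \<Rightarrow> real^'k^'k" where
  "frameA I w = (\<Sum>j\<in>I. outer (w j))"

definition pos_def_mat :: "real^'k^'k \<Rightarrow> bool" where
  "pos_def_mat M \<longleftrightarrow> transpose M = M \<and> (\<forall>x. x \<noteq> 0 \<longrightarrow> x \<bullet> (M *v x) > 0)"

definition mat_sqrt :: "real^'k^'k \<Rightarrow> real^'k^'k" where
  "mat_sqrt A = (THE M. pos_def_mat M \<and> M ** M = A)"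

definition frameB :: "nat set \<Rightarrow> (nat \<Rightarrow> real^'k) \<Rightarrow> real^'k^'k" where
  "frameB I w = matrix_inv (mat_sqrt (frameA I w))"

definition is_frame :: "nat \<Rightarrow> (nat \<Rightarrow> real^'k) \<Rightarrow> bool" where
  "is_frame n S \<longleftrightarrow> span (S ` {..<n}) = UNIV"

definition is_uframe :: "nat \<Rightarrow> (nat \<Rightarrow> real^'k) \<Rightarrow> bool" where
  "is_uframe n S \<longleftrightarrow> is_frame n S \<and> frameA {..<n} S = mat 1"

end

theory Submission
  imports Defs
begin

text \<open>Put M = A_{S-i}. Since A_S = I, M = I - v_i v_i^T, which is positive definite because
  |v_i| < 1. Now A_S = M + v_i v_i^T and A_{S'} = M + v v^T, and writing M + w w^T as
  M^{1/2} (I + u u^T) M^{1/2} with u = M^{-1/2} w gives the determinant formula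
  det (M + w w^T) = det M (1 + |B_{S-i} w|^2). Hence 1 = det A_S = det M (1 + |B_{S-i} v_i|^2),
  while det A_{S'} = det M (1 + |B_{S-i} v|^2) > 0, so S' is a frame, and
  det B_{S'} = (det A_{S'})^{-1/2} is the claimed quotient.

  B_T is defined through the principal square root, whose existence and uniqueness come from
  the spectral theorem for symmetric matrices; an eigenvector in an invariant subspace is
  found by maximising the Rayleigh quotient x \<bullet> A x over its unit sphere.\<close>

lemma matrix_add_rdistrib: "(A + B) ** C = A ** C + B ** (C :: 'a::semiring_1^_^_)"
  by (vector matrix_matrix_mult_def sum.distrib[symmetric] field_simps)

lemma symmetric_matrix_inner:
  fixes A :: "real^'k^'k"
  assumes "transpose A = A"
  shows "x \<bullet> (A *v y) = (A *v x) \<bullet> y"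
  by (metis assms dot_lmul_matrix vector_transpose_matrix)

lemma matrix_eq_on_spanning_set:
  fixes X Y :: "real^'k^'k"
  assumes "span B = UNIV" and "\<And>b. b \<in> B \<Longrightarrow> X *v b = Y *v b"
  shows "X = Y"
  using linear_eq_on_span[OF matrix_vector_mul_linear matrix_vector_mul_linear, of B X Y] assms
  by (simp add: matrix_eq)

lemma outer_mult_vector: "outer w *v x = (w \<bullet> x) *\<^sub>R w"
  by (simp add: outer_def vec_eq_iff matrix_vector_mult_def inner_vec_def sum_distrib_left mult_ac)

lemma transpose_outer: "transpose (outer w) = outer w"
  by (simp add: outer_def transpose_def vec_eq_iff mult.commute)

lemma matrix_outer_transpose: "X ** outer w ** transpose X = outer (X *v w)"
  by (simp add: matrix_eq matrix_vector_mul_assoc[symmetric] outer_mult_vector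
      matrix_vector_mult_scaleR) (metis dot_lmul_matrix inner_commute)

lemma nonneg_quadratic_linear_coeff_eq_0:
  fixes b c :: real
  assumes "\<And>t. 0 \<le> b * t + c * t\<^sup>2"
  shows "b = 0"
proof -
  have "((\<lambda>t. b * t + c * t\<^sup>2) has_real_derivative b + c * (2 * 0)) (at 0)"
    by (auto intro!: derivative_eq_intros)
  from DERIV_local_min[OF this zero_less_one] show ?thesis
    using assms by simp
qed

lemma symmetric_invariant_subspace_eigenvector:
  fixes A :: "real^'k^'k"
  assumes sym: "transpose A = A" and V: "subspace V" "V \<noteq> {0}"
    and invariant: "\<And>x. x \<in> V \<Longrightarrow> A *v x \<in> V"
  obtains x l where "x \<in> V" "norm x = 1" "A *v x = l *\<^sub>R x"
proof -
  define f where "f x = x \<bullet> (A *v x)" for x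
  define K where "K = sphere 0 1 \<inter> V"
  have "compact K"
    unfolding K_def by (intro compact_Int_closed compact_sphere closed_subspace V)
  obtain y where "y \<in> V" "y \<noteq> 0" using V subspace_0 by blast
  then have "y /\<^sub>R norm y \<in> K" using V by (simp add: K_def subspace_scale)
  moreover have "continuous_on K f"
    unfolding f_def by (intro continuous_intros linear_continuous_on matrix_vector_mul_bounded_linear)
  ultimately obtain x where x: "x \<in> K" and max: "\<And>y. y \<in> K \<Longrightarrow> f y \<le> f x"
    using continuous_attains_sup[OF \<open>compact K\<close>] by blast
  define l where "l = f x"
  have xV: "x \<in> V" and xx: "x \<bullet> x = 1" using x by (auto simp: K_def dot_square_norm)
  have bound: "f y \<le> l * (y \<bullet> y)" if "y \<in> V" for y
  proof (cases "y = 0")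
    case False
    then have "y /\<^sub>R norm y \<in> K" using that V by (simp add: K_def subspace_scale)
    moreover have "f (y /\<^sub>R norm y) = f y / (norm y)\<^sup>2"
      by (simp add: f_def matrix_vector_mult_scaleR power2_eq_square divide_inverse)
    ultimately have "f y / (norm y)\<^sup>2 \<le> l" using max l_def by metis
    then show ?thesis using False by (simp add: dot_square_norm field_simps)
  qed (simp add: f_def)
  define z where "z = A *v x - l *\<^sub>R x"
  have "z \<in> V" unfolding z_def using V xV invariant by (simp add: subspace_diff subspace_scale)
  \<comment> \<open>the Rayleigh quotient is maximal at x, so its derivative in direction z vanishes\<close>
  have "0 \<le> (- 2 * (z \<bullet> z)) * t + (l * (z \<bullet> z) - f z) * t\<^sup>2" for t
  proof -
    have "x + t *\<^sub>R z \<in> V" using V xV \<open>z \<in> V\<close> by (simp add: subspace_add subspace_scale)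
    from bound[OF this] have "0 \<le> l * ((x + t *\<^sub>R z) \<bullet> (x + t *\<^sub>R z)) - f (x + t *\<^sub>R z)"
      by simp
    also have "\<dots> = 2 * t * (l * (x \<bullet> z) - z \<bullet> (A *v x)) + (l * (z \<bullet> z) - f z) * t\<^sup>2"
      using xx symmetric_matrix_inner[OF sym, of x z]
      by (simp add: f_def l_def matrix_vector_right_distrib matrix_vector_mult_scaleR
          inner_add_left inner_add_right inner_commute power2_eq_square algebra_simps)
    also have "l * (x \<bullet> z) - z \<bullet> (A *v x) = - (z \<bullet> z)"
      by (simp add: z_def inner_diff_left inner_commute)
    finally show ?thesis by (simp add: mult_ac)
  qed
  then have "z = 0" using nonneg_quadratic_linear_coeff_eq_0 by fastforce
  then show thesis using that xV x by (auto simp: K_def z_def)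
qed

lemma symmetric_invariant_subspace_orthonormal_eigenbasis:
  fixes A :: "real^'k^'k"
  assumes sym: "transpose A = A"
  shows "subspace V \<Longrightarrow> (\<And>x. x \<in> V \<Longrightarrow> A *v x \<in> V) \<Longrightarrow>
    \<exists>B. pairwise orthogonal B \<and> (\<forall>b\<in>B. norm b = 1 \<and> (\<exists>l. A *v b = l *\<^sub>R b)) \<and> span B = V"
proof (induction "dim V" arbitrary: V rule: less_induct)
  case less
  show ?case
  proof (cases "V = {0}")
    case True
    then show ?thesis by (intro exI[of _ "{}"]) auto
  next
    case False
    obtain x l where xV: "x \<in> V" and nx: "norm x = 1" and eigen: "A *v x = l *\<^sub>R x"
      using symmetric_invariant_subspace_eigenvector[OF sym less.prems(1) False less.prems(2)] by metis
    define W where "W = V \<inter> {y. x \<bullet> y = 0}"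
    have W: "subspace W"
      unfolding W_def by (intro subspace_inter less.prems(1) subspace_hyperplane)
    have "A *v y \<in> W" if "y \<in> W" for y
    proof -
      have "x \<bullet> (A *v y) = l * (x \<bullet> y)"
        by (simp add: symmetric_matrix_inner[OF sym] eigen)
      then show ?thesis using that less.prems(2) by (simp add: W_def)
    qed
    moreover have "dim W < dim V"
    proof -
      have "x \<notin> W" using nx by (simp add: W_def dot_square_norm)
      then have "W \<subset> V" using xV W_def by blast
      then have "span W \<subset> span V" using W less.prems(1) by (metis span_eq_iff)
      then show ?thesis by (rule dim_psubset)
    qed
    ultimately obtain B where B: "pairwise orthogonal B"
      "\<forall>b\<in>B. norm b = 1 \<and> (\<exists>l. A *v b = l *\<^sub>R b)" "span B = W"
      using less.hyps W by blast
    have "span (insert x B) = V"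
    proof
      have "insert x B \<subseteq> V" using B(3) xV span_superset[of B] by (auto simp: W_def)
      then show "span (insert x B) \<subseteq> V" using less.prems(1) by (rule span_minimal)
    next
      show "V \<subseteq> span (insert x B)"
      proof
        fix y assume "y \<in> V"
        then have "y - (x \<bullet> y) *\<^sub>R x \<in> span B"
          using B(3) xV less.prems(1) nx
          by (simp add: W_def subspace_diff subspace_scale inner_diff_right dot_square_norm)
        then show "y \<in> span (insert x B)"
          by (metis span_breakdown_eq)
      qed
    qed
    moreover have "pairwise orthogonal (insert x B)"
      using B(1,3) span_superset[of B] by (auto simp: pairwise_insert W_def orthogonal_def inner_commute)
    ultimately show ?thesis using B(2) nx eigen by blast
  qed
qed

lemma symmetric_matrix_orthonormal_eigenbasis:
  fixes A :: "real^'k^'k"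
  assumes "transpose A = A"
  obtains B where "finite B" "pairwise orthogonal B" "span B = UNIV"
    "\<And>b. b \<in> B \<Longrightarrow> norm b = 1" "\<And>b. b \<in> B \<Longrightarrow> \<exists>l. A *v b = l *\<^sub>R b"
proof -
  obtain B where B: "pairwise orthogonal B" "\<forall>b\<in>B. norm b = 1 \<and> (\<exists>l. A *v b = l *\<^sub>R b)"
    "span B = UNIV"
    using symmetric_invariant_subspace_orthonormal_eigenbasis[OF assms subspace_UNIV] by blast
  moreover have "finite B"
    using B(1,2) pairwise_orthogonal_independent[of B] finiteI_independent by fastforce
  ultimately show thesis using that by blast
qed

lemma invertible_matrix_inv:
  fixes A :: "real^'k^'k"
  assumes "invertible A"
  shows "A ** matrix_inv A = mat 1" "matrix_inv A ** A = mat 1"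
  using someI_ex[OF assms[unfolded invertible_def]] by (simp_all add: matrix_inv_def)

lemma det_matrix_inv:
  fixes A :: "real^'k^'k"
  assumes "invertible A"
  shows "det (matrix_inv A) = 1 / det A"
proof -
  have "det A * det (matrix_inv A) = 1"
    by (metis det_I det_mul invertible_matrix_inv(1)[OF assms])
  moreover from this have "det A \<noteq> 0" by auto
  ultimately show ?thesis by (simp add: field_simps)
qed

lemma pos_def_mat_symmetric: "pos_def_mat M \<Longrightarrow> transpose M = M"
  by (simp add: pos_def_mat_def)

lemma pos_def_mat_invertible:
  fixes M :: "real^'k^'k"
  assumes "pos_def_mat M"
  shows "invertible M"
proof -
  have "inj ((*v) M)"
  proof (rule injI)
    fix x y assume "M *v x = M *v y"
    then have "(x - y) \<bullet> (M *v (x - y)) = 0" by (simp add: matrix_vector_mult_diff_distrib)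
    then show "x = y" using assms unfolding pos_def_mat_def by (metis less_irrefl right_minus_eq)
  qed
  then show ?thesis by (simp add: invertible_left_inverse matrix_left_invertible_injective)
qed

lemma pos_def_mat_orthonormal_eigenbasis:
  fixes A :: "real^'k^'k"
  assumes "pos_def_mat A"
  obtains B lam where "finite B" "pairwise orthogonal B" "span B = UNIV"
    "\<And>b. b \<in> B \<Longrightarrow> norm b = 1" "\<And>b. b \<in> B \<Longrightarrow> A *v b = lam b *\<^sub>R b"
    "\<And>b. b \<in> B \<Longrightarrow> lam b > 0"
proof -
  obtain B where B: "finite B" "pairwise orthogonal B" "span B = UNIV"
    "\<And>b. b \<in> B \<Longrightarrow> norm b = 1" "\<And>b. b \<in> B \<Longrightarrow> \<exists>l. A *v b = l *\<^sub>R b"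
    using symmetric_matrix_orthonormal_eigenbasis[OF pos_def_mat_symmetric[OF assms]] by blast
  then obtain lam where lam: "\<And>b. b \<in> B \<Longrightarrow> A *v b = lam b *\<^sub>R b" by metis
  have "lam b > 0" if "b \<in> B" for b
  proof -
    have "b \<noteq> 0" using B(4)[OF that] by (metis norm_zero zero_neq_one)
    then have "0 < b \<bullet> (A *v b)" using assms by (simp add: pos_def_mat_def)
    then show ?thesis using lam[OF that] B(4)[OF that] by (simp add: dot_square_norm)
  qed
  with B lam show thesis using that by blast
qed

lemma pos_def_sqrt_on_eigenvector:
  fixes N A :: "real^'k^'k"
  assumes N: "pos_def_mat N" "N ** N = A" and eigen: "A *v b = l *\<^sub>R b" and "l \<ge> 0"
  shows "N *v b = sqrt l *\<^sub>R b"
proof -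
  define s where "s = sqrt l"
  define y where "y = N *v b - s *\<^sub>R b"
  have "s \<ge> 0" "s * s = l" using \<open>l \<ge> 0\<close> by (auto simp: s_def)
  \<comment> \<open>(N + s) y = (A - l) b = 0\<close>
  have "N *v y = - s *\<^sub>R y"
    using \<open>s * s = l\<close> by (simp add: y_def N(2) matrix_vector_mult_diff_distrib
        matrix_vector_mult_scaleR matrix_vector_mul_assoc eigen algebra_simps)
  then have "\<not> y \<bullet> (N *v y) > 0" using \<open>s \<ge> 0\<close> by (simp add: not_less)
  then have "y = 0" using N(1) unfolding pos_def_mat_def by blast
  then show ?thesis by (simp add: y_def s_def)
qed

lemma pos_def_sqrt_unique:
  fixes A N N' :: "real^'k^'k"
  assumes "pos_def_mat A" "pos_def_mat N" "N ** N = A" "pos_def_mat N'" "N' ** N' = A"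
  shows "N = N'"
proof -
  obtain B lam where B: "span B = UNIV" "\<And>b. b \<in> B \<Longrightarrow> A *v b = lam b *\<^sub>R b"
    "\<And>b. b \<in> B \<Longrightarrow> lam b > 0"
    using pos_def_mat_orthonormal_eigenbasis[OF assms(1)] by metis
  show ?thesis
  proof (rule matrix_eq_on_spanning_set[OF B(1)])
    fix b assume "b \<in> B"
    then have "A *v b = lam b *\<^sub>R b" "lam b \<ge> 0" using B(2,3) less_imp_le by auto
    then show "N *v b = N' *v b"
      using pos_def_sqrt_on_eigenvector assms(2-5) by metis
  qed
qed

lemma transpose_sum: "transpose (\<Sum>j\<in>I. M j) = (\<Sum>j\<in>I. transpose (M j))"
  by (induction I rule: infinite_finite_induct) (auto simp: transpose_def vec_eq_iff)

lemma pos_def_sqrt_exists: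
  fixes A :: "real^'k^'k"
  assumes "pos_def_mat A"
  shows "\<exists>M. pos_def_mat M \<and> M ** M = A"
proof -
  obtain B lam where B: "finite B" "pairwise orthogonal B" "span B = UNIV"
    "\<And>b. b \<in> B \<Longrightarrow> norm b = 1" and lam: "\<And>b. b \<in> B \<Longrightarrow> A *v b = lam b *\<^sub>R b"
    "\<And>b. b \<in> B \<Longrightarrow> lam b > 0"
    using pos_def_mat_orthonormal_eigenbasis[OF assms] by metis
  define M where "M = (\<Sum>b\<in>B. sqrt (lam b) *\<^sub>R outer b)"
  have Mx: "M *v x = (\<Sum>b\<in>B. (sqrt (lam b) * (b \<bullet> x)) *\<^sub>R b)" for x
    unfolding M_def using B(1)
    by (induction B rule: finite_induct)
      (simp_all add: matrix_vector_mult_add_rdistrib scaleR_matrix_vector_assoc[symmetric] outer_mult_vector)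
  have Mb: "M *v c = sqrt (lam c) *\<^sub>R c" if "c \<in> B" for c
  proof -
    have "b \<bullet> c = (if b = c then 1 else 0)" if "b \<in> B" for b
      using B(2,4) \<open>c \<in> B\<close> that by (auto simp: pairwise_def orthogonal_def dot_square_norm)
    then have "M *v c = (\<Sum>b\<in>B. if b = c then sqrt (lam c) *\<^sub>R c else 0)"
      unfolding Mx by (intro sum.cong) auto
    then show ?thesis using B(1) \<open>c \<in> B\<close> by simp
  qed
  have "pos_def_mat M"
    unfolding pos_def_mat_def
  proof (intro conjI allI impI)
    show "transpose M = M" by (simp add: M_def transpose_sum transpose_scalar transpose_outer)
  next
    fix x :: "real^'k" assume "x \<noteq> 0"
    then obtain b where b: "b \<in> B" "b \<bullet> x \<noteq> 0"
      using orthogonal_to_span[of x B x] B(3) by (auto simp: orthogonal_def inner_commute)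
    have "0 < (\<Sum>b\<in>B. sqrt (lam b) * (b \<bullet> x)\<^sup>2)"
      using b lam(2) by (intro sum_pos2[OF B(1) b(1)])
        (simp, meson less_imp_le mult_nonneg_nonneg real_sqrt_ge_zero zero_le_power2)
    also have "\<dots> = x \<bullet> (M *v x)"
      by (simp add: Mx inner_sum_right power2_eq_square inner_commute mult_ac)
    finally show "x \<bullet> (M *v x) > 0" .
  qed
  moreover have "M ** M = A"
    by (rule matrix_eq_on_spanning_set[OF B(3)])
      (simp add: matrix_vector_mul_assoc[symmetric] Mb lam less_imp_le matrix_vector_mult_scaleR)
  ultimately show ?thesis by blast
qed

lemma
  fixes A :: "real^'k^'k"
  assumes "pos_def_mat A"
  shows pos_def_mat_sqrt: "pos_def_mat (mat_sqrt A)"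
    and mat_sqrt_square: "mat_sqrt A ** mat_sqrt A = A"
proof -
  have "\<exists>!M. pos_def_mat M \<and> M ** M = A"
    using pos_def_sqrt_exists[OF assms] pos_def_sqrt_unique[OF assms] by blast
  from theI'[OF this] show "pos_def_mat (mat_sqrt A)" "mat_sqrt A ** mat_sqrt A = A"
    by (simp_all add: mat_sqrt_def)
qed

lemma det_square_mat_sqrt:
  fixes A :: "real^'k^'k"
  assumes "pos_def_mat A"
  shows "det A = (det (mat_sqrt A))\<^sup>2"
  by (metis mat_sqrt_square[OF assms] det_mul power2_eq_square)

lemma det_pos_def_mat_pos:
  fixes A :: "real^'k^'k"
  assumes "pos_def_mat A"
  shows "det A > 0"
proof -
  have "det (mat_sqrt A) \<noteq> 0"
    using pos_def_mat_invertible[OF pos_def_mat_sqrt[OF assms]] by (simp add: invertible_det_nz)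
  then show ?thesis by (simp add: det_square_mat_sqrt[OF assms])
qed

lemma det_mat_sqrt:
  fixes A :: "real^'k^'k"
  assumes "pos_def_mat A"
  shows "det (mat_sqrt A) = sqrt (det A)"
  using det_pos_def_mat_pos[OF pos_def_mat_sqrt[OF assms]] by (simp add: det_square_mat_sqrt[OF assms])

lemma det_identity_plus_outer:
  fixes w :: "real^'k"
  shows "det (mat 1 + outer w) = 1 + (norm w)\<^sup>2"
proof (cases "w = 0")
  case True
  then show ?thesis by (simp add: outer_def vec_eq_iff flip: zero_vec_def)
next
  case False
  \<comment> \<open>rotate w onto a coordinate axis, where the matrix becomes diagonal\<close>
  fix k :: 'k
  obtain Q where Q: "orthogonal_matrix Q" "Q *v axis k 1 = w /\<^sub>R norm w"
    using orthogonal_matrix_exists_basis[of "w /\<^sub>R norm w"] False by auto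
  define D where "D = mat 1 + outer (norm w *\<^sub>R axis k (1::real))"
  have "mat 1 + outer w = Q ** D ** transpose Q"
    using Q False by (simp add: D_def matrix_add_ldistrib matrix_add_rdistrib matrix_outer_transpose
        matrix_vector_mult_scaleR orthogonal_matrix_def)
  moreover have "det (Q ** transpose Q) = 1" using Q(1) by (simp add: orthogonal_matrix_def)
  ultimately have "det (mat 1 + outer w) = det D"
    by (simp add: det_mul)
  also have "\<dots> = (\<Prod>j\<in>UNIV. 1 + (if j = k then (norm w)\<^sup>2 else 0))"
    by (subst det_diagonal) (auto simp: D_def outer_def mat_def axis_def power2_eq_square intro!: prod.cong)
  also have "\<dots> = 1 + (norm w)\<^sup>2"
    by (subst prod.remove[of _ k]) auto
  finally show ?thesis .
qed

lemma det_add_outer: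
  fixes M :: "real^'k^'k"
  assumes "pos_def_mat M"
  shows "det (M + outer v) = det M * (1 + (norm (matrix_inv (mat_sqrt M) *v v))\<^sup>2)"
proof -
  define R where "R = mat_sqrt M"
  define w where "w = matrix_inv R *v v"
  have R: "pos_def_mat R" "R ** R = M"
    using pos_def_mat_sqrt[OF assms] mat_sqrt_square[OF assms] by (simp_all add: R_def)
  have "R *v w = v"
    using invertible_matrix_inv(1)[OF pos_def_mat_invertible[OF R(1)]]
    by (simp add: w_def matrix_vector_mul_assoc)
  then have "M + outer v = R ** (mat 1 + outer w) ** R"
    using matrix_outer_transpose[of R w] pos_def_mat_symmetric[OF R(1)]
    by (simp add: R(2) matrix_add_ldistrib matrix_add_rdistrib)
  then have "det (M + outer v) = (det R)\<^sup>2 * det (mat 1 + outer w)"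
    by (simp add: det_mul power2_eq_square)
  then show ?thesis
    by (simp add: det_square_mat_sqrt[OF assms] det_identity_plus_outer R_def w_def)
qed

lemma pos_def_add_outer:
  fixes M :: "real^'k^'k"
  assumes "pos_def_mat M"
  shows "pos_def_mat (M + outer v)"
  unfolding pos_def_mat_def
proof (intro conjI allI impI)
  show "transpose (M + outer v) = M + outer v"
    using pos_def_mat_symmetric[OF assms] transpose_outer[of v]
    by (simp add: transpose_def vec_eq_iff)
next
  fix x :: "real^'k" assume "x \<noteq> 0"
  then have "0 < x \<bullet> (M *v x)" using assms by (simp add: pos_def_mat_def)
  also have "\<dots> \<le> x \<bullet> ((M + outer v) *v x)"
    by (simp add: matrix_vector_mult_add_rdistrib outer_mult_vector inner_add_right inner_commute)
  finally show "0 < x \<bullet> ((M + outer v) *v x)" .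
qed

lemma pos_def_identity_minus_outer:
  fixes u :: "real^'k"
  assumes "norm u < 1"
  shows "pos_def_mat (mat 1 - outer u)"
  unfolding pos_def_mat_def
proof (intro conjI allI impI)
  show "transpose (mat 1 - outer u) = mat 1 - outer u"
    using transpose_outer[of u] by (simp add: transpose_def vec_eq_iff mat_def)
next
  fix x :: "real^'k" assume "x \<noteq> 0"
  have "u \<bullet> u < 1" using assms by (simp add: dot_square_norm power_less_one_iff)
  have "(u \<bullet> x)\<^sup>2 \<le> (u \<bullet> u) * (x \<bullet> x)"
    by (rule Cauchy_Schwarz_ineq)
  also have "\<dots> < x \<bullet> x"
    using mult_strict_right_mono[OF \<open>u \<bullet> u < 1\<close>, of "x \<bullet> x"] \<open>x \<noteq> 0\<close> by simp
  finally show "0 < x \<bullet> ((mat 1 - outer u) *v x)"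
    by (simp add: matrix_vector_mult_diff_rdistrib outer_mult_vector inner_diff_right
        power2_eq_square inner_commute)
qed

lemma frameA_cong: "(\<And>j. j \<in> I \<Longrightarrow> S j = T j) \<Longrightarrow> frameA I S = frameA I T"
  by (simp add: frameA_def)

lemma frameA_remove:
  assumes "finite I" "i \<in> I"
  shows "frameA I S = frameA (I - {i}) S + outer (S i)"
  using sum.remove[OF assms, of "\<lambda>j. outer (S j)"] by (simp add: frameA_def add.commute)

lemma frameA_mult_vector:
  "finite I \<Longrightarrow> frameA I S *v x = (\<Sum>j\<in>I. (S j \<bullet> x) *\<^sub>R S j)"
  by (induction I rule: finite_induct)
    (simp_all add: frameA_def matrix_vector_mult_add_rdistrib outer_mult_vector)

lemma is_frame_if_pos_def_frameA:
  fixes S :: "nat \<Rightarrow> real^'k"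
  assumes "pos_def_mat (frameA {..<n} S)"
  shows "is_frame n S"
proof (rule ccontr)
  assume "\<not> is_frame n S"
  then have "dim (S ` {..<n}) < DIM(real^'k)"
    using dim_eq_full[of "S ` {..<n}"] dim_subset_UNIV[of "S ` {..<n}"] by (simp add: is_frame_def)
  then obtain x :: "real^'k" where "x \<noteq> 0" and "\<And>y. y \<in> span (S ` {..<n}) \<Longrightarrow> orthogonal x y"
    by (rule orthogonal_to_subspace_exists) blast
  then have "x \<bullet> S j = 0" if "j < n" for j
    using that by (simp add: span_base orthogonal_def)
  then have "frameA {..<n} S *v x = 0" by (simp add: frameA_mult_vector inner_commute)
  then show False using assms \<open>x \<noteq> 0\<close> unfolding pos_def_mat_def by (metis inner_zero_right less_irrefl)
qed

lemma det_frameB: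
  assumes "pos_def_mat (frameA I S)"
  shows "det (frameB I S) = 1 / sqrt (det (frameA I S))"
  using pos_def_mat_invertible[OF pos_def_mat_sqrt[OF assms]]
  by (simp add: frameB_def det_matrix_inv det_mat_sqrt[OF assms])

theorem lemma5:
  fixes S :: "nat \<Rightarrow> real^'k" and v :: "real^'k" and n i :: nat
  assumes "is_uframe n S" and "i < n" and "norm (S i) < 1"
  shows "is_frame n (S(i := v)) \<and>
    det (frameB {..<n} (S(i := v))) =
      sqrt ((1 + (norm (frameB ({..<n} - {i}) S *v S i))\<^sup>2) /
            (1 + (norm (frameB ({..<n} - {i}) S *v v))\<^sup>2))"
proof -
  define M where "M = frameA ({..<n} - {i}) S"
  define p where "p = (norm (frameB ({..<n} - {i}) S *v S i))\<^sup>2"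
  define q where "q = (norm (frameB ({..<n} - {i}) S *v v))\<^sup>2"
  have A: "frameA {..<n} S = M + outer (S i)"
    using frameA_remove[of "{..<n}" i S] assms(2) by (simp add: M_def)
  have A': "frameA {..<n} (S(i := v)) = M + outer v"
    using frameA_remove[of "{..<n}" i "S(i := v)"] frameA_cong[of "{..<n} - {i}" "S(i := v)" S] assms(2)
    by (simp add: M_def)
  have "M = mat 1 - outer (S i)"
    using assms(1) A by (simp add: is_uframe_def eq_diff_eq)
  then have M: "pos_def_mat M" using pos_def_identity_minus_outer[OF assms(3)] by simp
  have "det M * (1 + p) = 1"
    using det_add_outer[OF M, of "S i"] A assms(1) by (simp add: is_uframe_def p_def M_def frameB_def)
  moreover have "det (frameA {..<n} (S(i := v))) = det M * (1 + q)"
    using det_add_outer[OF M, of v] A' by (simp add: q_def M_def frameB_def)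
  moreover have "0 \<le> p" by (simp add: p_def)
  ultimately have "det (frameA {..<n} (S(i := v))) = (1 + q) / (1 + p)"
    by (simp add: field_simps)
  moreover have "pos_def_mat (frameA {..<n} (S(i := v)))"
    using pos_def_add_outer[OF M] A' by simp
  ultimately show ?thesis
    by (simp add: is_frame_if_pos_def_frameA det_frameB p_def q_def real_sqrt_divide)
qed

end
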